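(* Let $\mathsf{X}$ be a metric space and $\preceq$ a closed, down-compact partial order on it. Then for all sequences $(x^-_n)$, $(x_n)$, $(x^+_n)$ in $\mathsf{X}$ and $x_\infty\in\mathsf{X}$: if $x^-_n\preceq x_n\preceq x^+_n$ for all $n$, $x^-_n\to x_\infty$ and $x^+_n\to x_\infty$, then $x_n\to x_\infty$.
   Context: A partial order $\preceq$ on a metric space $\mathsf{X}$ is closed if its graph $\{(x,y):x\preceq y\}$ is closed in $\mathsf{X}\times\mathsf{X}$, and down-compact if for every compact $K^+\subset\mathsf{X}$ the set $\{x\in\mathsf{X}:\exists x^+\in K^+,\ x\preceq x^+\}$ is compact. *)

theory Defs
  imports "HOL-Analysis.Analysis"
begin

definition partial_order_rel :: "('a \<Rightarrow> 'a \<Rightarrow> bool) \<Rightarrow> bool" where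
  "partial_order_rel le \<longleftrightarrow>
     (\<forall>x. le x x) \<and> (\<forall>x y. le x y \<and> le y x \<longrightarrow> x = y) \<and>
     (\<forall>x y z. le x y \<and> le y z \<longrightarrow> le x z)"

definition closed_order :: "('a::topological_space \<Rightarrow> 'a \<Rightarrow> bool) \<Rightarrow> bool" where
  "closed_order le \<longleftrightarrow> closed {(x, y). le x y}"

definition down_compact :: "('a::topological_space \<Rightarrow> 'a \<Rightarrow> bool) \<Rightarrow> bool" where
  "down_compact le \<longleftrightarrow>
     (\<forall>K. compact K \<longrightarrow> compact {x. \<exists>xp\<in>K. le x xp})"

end

theory Submission
  imports Defs
begin

text \<open>The sequence \<open>x\<close> stays in the down-set of \<open>{x\<^sub>\<infinity>} \<union> {x\<^sup>+\<^sub>n}\<close>, which is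
  compact because the order is down-compact. By closedness of the order, the limit \<open>y\<close> of any
  convergent subsequence of \<open>x\<close> satisfies \<open>x\<^sub>\<infinity> \<preceq> y \<preceq> x\<^sub>\<infinity>\<close>, so \<open>y = x\<^sub>\<infinity>\<close>; a
  sequence in a sequentially compact set whose convergent subsequences all have the same limit
  converges to it.\<close>

lemma compact_insert_range_LIMSEQ:
  fixes f :: "nat \<Rightarrow> 'a::topological_space"
  assumes "f \<longlonglongrightarrow> l"
  shows "compact (insert l (range f))"
  using compactin_sequence_with_limit[of euclidean f l "range f"] assms
  by (simp add: limitin_canonical_iff)

lemma seq_compact_subseq_limits_imp_LIMSEQ:
  fixes f :: "nat \<Rightarrow> 'a::topological_space"
  assumes "seq_compact K" and "\<And>n. f n \<in> K"
    and limits: "\<And>r y. strict_mono r \<Longrightarrow> (f \<circ> r) \<longlonglongrightarrow> y \<Longrightarrow> y = l"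
  shows "f \<longlonglongrightarrow> l"
proof (rule ccontr)
  assume "\<not> f \<longlonglongrightarrow> l"
  then obtain U where U: "open U" "l \<in> U" and "\<not> (\<forall>\<^sub>F n in sequentially. f n \<in> U)"
    unfolding tendsto_def by blast
  then have "infinite {n. f n \<notin> U}"
    by (simp add: eventually_sequentially infinite_nat_iff_unbounded_le)
  then obtain r :: "nat \<Rightarrow> nat" where r: "strict_mono r" "\<And>n. f (r n) \<notin> U"
    using infinite_enumerate by blast
  obtain s y where s: "strict_mono s" "((f \<circ> r) \<circ> s) \<longlonglongrightarrow> y"
    using \<open>seq_compact K\<close> assms(2) unfolding seq_compact_def by (metis comp_apply)
  have "y = l"
    using limits[of "r \<circ> s" y] r(1) s by (simp add: strict_mono_o o_assoc)
  then have "\<forall>\<^sub>F n in sequentially. f (r (s n)) \<in> U"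
    using s(2) U unfolding tendsto_def by simp
  then show False
    using r(2) by (simp add: eventually_sequentially)
qed

lemma closed_order_tendsto_le:
  assumes "closed_order le" and "(f \<longlongrightarrow> a) F" and "(g \<longlongrightarrow> b) F"
    and "\<forall>\<^sub>F x in F. le (f x) (g x)" and "F \<noteq> bot"
  shows "le a b"
proof -
  have "((\<lambda>x. (f x, g x)) \<longlongrightarrow> (a, b)) F"
    using assms(2,3) by (rule tendsto_Pair)
  moreover have "\<forall>\<^sub>F x in F. (f x, g x) \<in> {(x, y). le x y}"
    using assms(4) by simp
  ultimately have "(a, b) \<in> {(x, y). le x y}"
    using assms(1,5) unfolding closed_order_def by (intro Lim_in_closed_set)
  then show ?thesis by simp
qed

theorem lemma3p14:
  fixes le :: "'a::metric_space \<Rightarrow> 'a \<Rightarrow> bool"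
    and xm x xp :: "nat \<Rightarrow> 'a" and xinf :: 'a
  assumes "partial_order_rel le" and "closed_order le" and "down_compact le"
    and "\<And>n. le (xm n) (x n)" and "\<And>n. le (x n) (xp n)"
    and "xm \<longlonglongrightarrow> xinf" and "xp \<longlonglongrightarrow> xinf"
  shows "x \<longlonglongrightarrow> xinf"
proof (rule seq_compact_subseq_limits_imp_LIMSEQ)
  let ?K = "{z. \<exists>w\<in>insert xinf (range xp). le z w}"
  show "seq_compact ?K"
    using assms(3,7) compact_insert_range_LIMSEQ compact_imp_seq_compact
    unfolding down_compact_def by blast
  show "x n \<in> ?K" for n
    using assms(5) by blast
next
  fix r y
  assume r: "strict_mono r" and y: "(x \<circ> r) \<longlonglongrightarrow> y"
  have "le xinf y"
    using closed_order_tendsto_le[OF assms(2) LIMSEQ_subseq_LIMSEQ[OF assms(6) r] y] assms(4)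
    by simp
  moreover have "le y xinf"
    using closed_order_tendsto_le[OF assms(2) y LIMSEQ_subseq_LIMSEQ[OF assms(7) r]] assms(5)
    by simp
  ultimately show "y = xinf"
    using assms(1) unfolding partial_order_rel_def by blast
qed

end
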